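(* Let $\mathcal{H}$ be a real Hilbert space, let $A_1, A_2:\mathcal{H}\to 2^{\mathcal{H}}$ be maximally monotone, let $B:\mathcal{H}\to\mathcal{H}$ be monotone and $L$-Lipschitz continuous ($L>0$), let $C:\mathcal{H}\to\mathcal{H}$ be $\beta$-cocoercive ($\beta>0$), and assume that $\mathrm{zer}(A_1+A_2+B+C)\neq\emptyset$. Let $\lambda>0$ and $\gamma\in\left(0,\frac{\lambda\beta}{\beta+\lambda(2\beta L+1)}\right)$. Let $x_0,x_{-1},u_0\in\mathcal{H}$ and define for $n\ge0$ $$\begin{aligned}x_{n+1}&=J_{\gamma A_2}\big(x_n-\gamma u_n-\gamma(2Bx_n-Bx_{n-1})-\gamma Cx_n\big),\\ y_{n+1}&=J_{\lambda A_1}(2x_{n+1}-x_n+\lambda u_n),\\ u_{n+1}&=u_n+\tfrac{1}{\lambda}(2x_{n+1}-x_n-y_{n+1}).\end{aligned}$$ Then $\{x_n\}$ converges weakly to a point $\bar x\in\mathrm{zer}(A_1+A_2+B+C)$.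
   Context: $J_{\gamma A}=(\mathrm{Id}+\gamma A)^{-1}$ denotes the resolvent of a maximally monotone operator $A$. $\mathrm{zer}(T)=\{x:0\in Tx\}$. $C$ is $\beta$-cocoercive if $\langle x-y,Cx-Cy\rangle\ge\beta\|Cx-Cy\|^2$ for all $x,y$. *)

theory Defs
  imports "HOL-Analysis.Analysis"
begin

definition monotone_op :: "('a::real_inner \<Rightarrow> 'a set) \<Rightarrow> bool" where
  "monotone_op A \<longleftrightarrow>
     (\<forall>x y u v. u \<in> A x \<longrightarrow> v \<in> A y \<longrightarrow> 0 \<le> (x - y) \<bullet> (u - v))"

definition maximally_monotone :: "('a::real_inner \<Rightarrow> 'a set) \<Rightarrow> bool" where
  "maximally_monotone A \<longleftrightarrow> monotone_op A \<and>
     (\<forall>x u. (\<forall>y v. v \<in> A y \<longrightarrow> 0 \<le> (x - y) \<bullet> (u - v)) \<longrightarrow> u \<in> A x)"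

definition monotone_fun :: "('a::real_inner \<Rightarrow> 'a) \<Rightarrow> bool" where
  "monotone_fun B \<longleftrightarrow> (\<forall>x y. 0 \<le> (x - y) \<bullet> (B x - B y))"

definition cocoercive :: "real \<Rightarrow> ('a::real_inner \<Rightarrow> 'a) \<Rightarrow> bool" where
  "cocoercive \<beta> C \<longleftrightarrow> (\<forall>x y. (x - y) \<bullet> (C x - C y) \<ge> \<beta> * (norm (C x - C y))\<^sup>2)"

text \<open>Resolvent J_{\<gamma>A} = (Id + \<gamma>A)^{-1}: the unique p with x \<in> p + \<gamma> A p
  (single-valued and everywhere defined when A is maximally monotone, \<gamma> > 0).\<close>
definition resolvent :: "real \<Rightarrow> ('a::real_inner \<Rightarrow> 'a set) \<Rightarrow> 'a \<Rightarrow> 'a" where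
  "resolvent \<gamma> A x = (THE p. \<exists>a \<in> A p. x = p + \<gamma> *\<^sub>R a)"

definition zer :: "('a::real_vector \<Rightarrow> 'a set) \<Rightarrow> 'a set" where
  "zer T = {x. 0 \<in> T x}"

definition op_sum4 :: "('a::real_vector \<Rightarrow> 'a set) \<Rightarrow> ('a \<Rightarrow> 'a set) \<Rightarrow> ('a \<Rightarrow> 'a) \<Rightarrow> ('a \<Rightarrow> 'a) \<Rightarrow> 'a \<Rightarrow> 'a set" where
  "op_sum4 A1 A2 B C x = {a1 + a2 + B x + C x | a1 a2. a1 \<in> A1 x \<and> a2 \<in> A2 x}"

definition weakly_converges :: "(nat \<Rightarrow> 'a::real_inner) \<Rightarrow> 'a \<Rightarrow> bool" where
  "weakly_converges x l \<longleftrightarrow> (\<forall>z. (\<lambda>n. x n \<bullet> z) \<longlonglongrightarrow> l \<bullet> z)"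

end

theory Submission
  imports Defs "HOL-Library.Diagonal_Subsequence"
begin

text \<open>Fix a Kuhn-Tucker point (p, q), i.e. q \<in> A1 p and - q - B p - C p \<in> A2 p. Monotonicity of
  A1, A2 and B, cocoercivity of C and the bound on \<gamma> make
    \<Phi> n = \<parallel>x n - p\<parallel>^2 / \<gamma> - 2 \<langle>x n - p, u n - q\<rangle> + \<lambda> \<parallel>u n - q\<parallel>^2
          - 2 \<langle>x n - p, B (x n) - B (x (n - 1))\<rangle> + L \<parallel>x n - x (n - 1)\<parallel>^2
  decrease by at least a positive definite quadratic form in the increments
  (x (n + 1) - x n, u (n + 1) - u n). So the iterates are bounded, the increments tend to 0, and
  the distance of (x n, u n) to every Kuhn-Tucker point in the metric of the leading quadratic form
  converges. Passing to the limit in the monotonicity inequalities along a weakly convergent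
  subsequence shows, with Minty's theorem, that weak cluster points are Kuhn-Tucker points, and
  Opial's argument shows that there is only one. Minty's theorem is obtained by minimising the
  Fitzpatrick function plus half the squared norm, and weak sequential compactness from a
  diagonal subsequence and the Riesz representation on closed subspaces.\<close>

section \<open>Minimisation in Hilbert spaces\<close>

lemma norm_add_sq: "(norm (x + y))\<^sup>2 = (norm x)\<^sup>2 + 2 * (x \<bullet> y) + (norm y)\<^sup>2"
  for x y :: "'a::real_inner"
  by (simp add: power2_norm_eq_inner inner_add_left inner_add_right inner_commute)

lemma norm_diff_sq: "(norm (x - y))\<^sup>2 = (norm x)\<^sup>2 - 2 * (x \<bullet> y) + (norm y)\<^sup>2"
  for x y :: "'a::real_inner"
  by (simp add: power2_norm_eq_inner inner_diff_left inner_diff_right inner_commute)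

lemma abs_inner_le_bound:
  assumes "norm s \<le> K"
  shows "\<bar>s \<bullet> v\<bar> \<le> K * norm v"
proof -
  have "\<bar>s \<bullet> v\<bar> \<le> norm s * norm v" by (rule Cauchy_Schwarz_ineq2)
  also have "\<dots> \<le> K * norm v" using assms by (rule mult_right_mono) simp
  finally show ?thesis .
qed

lemma nonpos_if_le_mult_small:
  fixes a b :: real
  assumes "\<And>t. 0 < t \<Longrightarrow> t \<le> 1 \<Longrightarrow> a \<le> t * b"
  shows "a \<le> 0"
proof (rule ccontr)
  assume a: "\<not> a \<le> 0"
  define t where "t = min 1 (a / (2 * \<bar>b\<bar> + 1))"
  have "0 < t" "t \<le> 1" using a by (auto simp: t_def)
  moreover have "t * b \<le> t * \<bar>b\<bar>"
    using \<open>0 < t\<close> by (intro mult_left_mono) auto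
  moreover have "t * \<bar>b\<bar> \<le> a / (2 * \<bar>b\<bar> + 1) * \<bar>b\<bar>"
    by (intro mult_right_mono) (auto simp: t_def)
  moreover have "a / (2 * \<bar>b\<bar> + 1) * \<bar>b\<bar> < a"
    using a by (simp add: field_simps add_pos_nonneg)
  ultimately show False using assms[of t] by linarith
qed

lemma Cauchy_if_sq_dist_le_null:
  fixes s :: "nat \<Rightarrow> 'a::real_normed_vector"
  assumes e: "e \<longlonglongrightarrow> 0" and le: "\<And>i j. (norm (s i - s j))\<^sup>2 \<le> e i + e j"
  shows "Cauchy s"
proof (rule metric_CauchyI)
  fix \<epsilon> :: real assume "\<epsilon> > 0"
  then have "eventually (\<lambda>n. e n < \<epsilon>\<^sup>2 / 2) sequentially"
    using e by (intro order_tendstoD(2)) auto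
  then obtain M where M: "\<And>n. n \<ge> M \<Longrightarrow> e n < \<epsilon>\<^sup>2 / 2"
    unfolding eventually_sequentially by blast
  have "dist (s m) (s n) < \<epsilon>" if "m \<ge> M" "n \<ge> M" for m n
  proof -
    have "(norm (s m - s n))\<^sup>2 < \<epsilon>\<^sup>2" using le[of m n] M[OF that(1)] M[OF that(2)] by linarith
    then show ?thesis using \<open>\<epsilon> > 0\<close> by (simp add: dist_norm power_less_imp_less_base)
  qed
  then show "\<exists>M. \<forall>m\<ge>M. \<forall>n\<ge>M. dist (s m) (s n) < \<epsilon>" by blast
qed

lemma norm_midpoint_sq:
  fixes z w :: "'a::real_inner"
  shows "(norm ((1/2) *\<^sub>R (z + w)))\<^sup>2 = ((norm z)\<^sup>2 + (norm w)\<^sup>2) / 2 - (norm (z - w))\<^sup>2 / 4"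
  unfolding power2_norm_eq_inner
  by (simp add: inner_add_left inner_add_right inner_diff_left inner_diff_right inner_commute field_simps)

lemma convex_epigraph_half_norm_sq_midpoint:
  fixes S :: "('a::real_inner \<times> real) set"
  assumes cvx: "convex S" and zr: "(z, r) \<in> S" and ws: "(w, s) \<in> S"
    and m: "\<forall>(z', r')\<in>S. m \<le> (norm z')\<^sup>2 / 2 + r'"
  shows "(norm (z - w))\<^sup>2 \<le> 4 * ((norm z)\<^sup>2 / 2 + r + ((norm w)\<^sup>2 / 2 + s) - 2 * m)"
proof -
  have "(1/2) *\<^sub>R (z + w, r + s) \<in> S"
    using convexD[OF cvx zr ws, of "1/2" "1/2"] by (simp add: scaleR_right_distrib add_divide_distrib)
  with m have "m \<le> (norm ((1/2) *\<^sub>R (z + w)))\<^sup>2 / 2 + (r + s) / 2" by fastforce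
  also have "\<dots> = ((norm z)\<^sup>2 / 2 + r + ((norm w)\<^sup>2 / 2 + s)) / 2 - (norm (z - w))\<^sup>2 / 8"
    unfolding norm_midpoint_sq by (simp add: field_simps)
  finally show ?thesis by argo
qed

lemma convex_epigraph_attains_min_half_norm_sq:
  fixes S :: "('a::{real_inner,complete_space} \<times> real) set"
  assumes cvx: "convex S" and cl: "closed S" and ne: "S \<noteq> {}"
    and bdd: "\<And>z r. (z, r) \<in> S \<Longrightarrow> b \<le> (norm z)\<^sup>2 / 2 + r"
  shows "\<exists>(z, r)\<in>S. \<forall>(w, s)\<in>S. (norm z)\<^sup>2 / 2 + r \<le> (norm w)\<^sup>2 / 2 + s"
proof -
  define g :: "'a \<times> real \<Rightarrow> real" where "g = (\<lambda>(z, r). (norm z)\<^sup>2 / 2 + r)"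
  define m where "m = Inf (g ` S)"
  have m_le: "m \<le> g p" if "p \<in> S" for p
    unfolding m_def using that bdd by (intro cInf_lower bdd_belowI[of _ b]) (auto simp: g_def)
  then have m_le': "\<forall>(z, r)\<in>S. m \<le> (norm z)\<^sup>2 / 2 + r" by (auto simp: g_def)
  have "\<exists>p\<in>S. g p < m + 1 / (real n + 1)" for n
    using cInf_lessD[of "g ` S" "m + 1 / (real n + 1)"] ne unfolding m_def by auto
  then obtain ps where ps: "\<And>n. ps n \<in> S" and ps_m: "\<And>n. g (ps n) < m + 1 / (real n + 1)"
    by metis
  have "(\<lambda>n. m + 1 / (real n + 1)) \<longlonglongrightarrow> m"
    using LIMSEQ_inverse_real_of_nat_add[of m] by (simp add: inverse_eq_divide add.commute)
  then have g_lim: "(\<lambda>n. g (ps n)) \<longlonglongrightarrow> m"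
    by (rule tendsto_sandwich[rotated 2, OF tendsto_const])
       (auto intro: always_eventually less_imp_le m_le ps ps_m)
  then have "(\<lambda>n. 4 * (g (ps n) - m)) \<longlonglongrightarrow> 0"
    by (intro tendsto_eq_intros) auto
  moreover have "(norm (fst (ps i) - fst (ps j)))\<^sup>2 \<le> 4 * (g (ps i) - m) + 4 * (g (ps j) - m)" for i j
  proof -
    have "(fst (ps i), snd (ps i)) \<in> S" "(fst (ps j), snd (ps j)) \<in> S" using ps by simp_all
    from convex_epigraph_half_norm_sq_midpoint[OF cvx this m_le'] show ?thesis
      by (simp add: g_def case_prod_beta algebra_simps)
  qed
  ultimately have "Cauchy (\<lambda>n. fst (ps n))" by (rule Cauchy_if_sq_dist_le_null)
  then obtain z where z: "(\<lambda>n. fst (ps n)) \<longlonglongrightarrow> z"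
    using Cauchy_convergent_iff convergent_def by blast
  from g_lim have "(\<lambda>n. g (ps n) - (norm (fst (ps n)))\<^sup>2 / 2) \<longlonglongrightarrow> m - (norm z)\<^sup>2 / 2"
    by (intro tendsto_intros z) auto
  then have "(\<lambda>n. snd (ps n)) \<longlonglongrightarrow> m - (norm z)\<^sup>2 / 2"
    by (simp add: g_def case_prod_beta)
  with z have "ps \<longlonglongrightarrow> (z, m - (norm z)\<^sup>2 / 2)"
    using tendsto_Pair by fastforce
  then have "(z, m - (norm z)\<^sup>2 / 2) \<in> S"
    using closed_sequentially[OF cl] ps by blast
  moreover have "(norm z)\<^sup>2 / 2 + (m - (norm z)\<^sup>2 / 2) \<le> (norm w)\<^sup>2 / 2 + s" if "(w, s) \<in> S" for w s
    using m_le[OF that] by (simp add: g_def)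
  ultimately show ?thesis by blast
qed

lemma convex_epigraph_min_half_norm_sq_variational:
  fixes S :: "('a::real_inner \<times> real) set"
  assumes cvx: "convex S" and zr: "(z, r) \<in> S" and ws: "(w, s) \<in> S"
    and min: "\<forall>(w', s')\<in>S. (norm z)\<^sup>2 / 2 + r \<le> (norm w')\<^sup>2 / 2 + s'"
  shows "0 \<le> z \<bullet> (w - z) + (s - r)"
proof -
  have "- (z \<bullet> (w - z) + (s - r)) \<le> t * ((norm (w - z))\<^sup>2 / 2)" if t: "0 < t" "t \<le> 1" for t
  proof -
    have "t *\<^sub>R (w, s) + (1 - t) *\<^sub>R (z, r) \<in> S"
      using convexD[OF cvx ws zr] t by simp
    then have "(z + t *\<^sub>R (w - z), r + t * (s - r)) \<in> S"
      by (simp add: algebra_simps)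
    with min have "(norm z)\<^sup>2 / 2 + r \<le> (norm (z + t *\<^sub>R (w - z)))\<^sup>2 / 2 + (r + t * (s - r))"
      by fastforce
    moreover have "(norm (z + t *\<^sub>R (w - z)))\<^sup>2
        = (norm z)\<^sup>2 + 2 * (t * (z \<bullet> (w - z))) + t * (t * (norm (w - z))\<^sup>2)"
      unfolding norm_add_sq by (simp add: power_mult_distrib power2_eq_square)
    ultimately have "0 \<le> t * (z \<bullet> (w - z)) + t * (s - r) + t * (t * ((norm (w - z))\<^sup>2 / 2))"
      by (simp add: algebra_simps)
    also have "\<dots> = t * (z \<bullet> (w - z) + (s - r) + t * ((norm (w - z))\<^sup>2 / 2))"
      by (simp add: algebra_simps)
    finally show ?thesis using t by (simp add: zero_le_mult_iff)
  qed
  then have "- (z \<bullet> (w - z) + (s - r)) \<le> 0" by (rule nonpos_if_le_mult_small)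
  then show ?thesis by simp
qed

lemma convex_graph_linear_on_subspace:
  assumes sub: "subspace M"
    and add: "\<And>y z. y \<in> M \<Longrightarrow> z \<in> M \<Longrightarrow> f (y + z) = f y + f z"
    and scale: "\<And>y c. y \<in> M \<Longrightarrow> f (c *\<^sub>R y) = c * f y"
  shows "convex ((\<lambda>y. (y, f y)) ` M)"
  unfolding convex_def
proof (intro ballI allI impI)
  fix p q and u v :: real assume "p \<in> (\<lambda>y. (y, f y)) ` M" "q \<in> (\<lambda>y. (y, f y)) ` M"
  then obtain y z where "y \<in> M" "z \<in> M" "p = (y, f y)" "q = (z, f z)" by blast
  moreover from this have "f (u *\<^sub>R y + v *\<^sub>R z) = u * f y + v * f z"
    using sub add scale by (simp add: subspace_scale)
  ultimately show "u *\<^sub>R p + v *\<^sub>R q \<in> (\<lambda>y. (y, f y)) ` M"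
    using sub by (intro image_eqI[of _ _ "u *\<^sub>R y + v *\<^sub>R z"]) (auto simp: subspace_add subspace_scale)
qed

lemma Riesz_representation_subspace:
  fixes M :: "'a::{real_inner,complete_space} set" and f :: "'a \<Rightarrow> real"
  assumes sub: "subspace M" and cl: "closed M"
    and add: "\<And>y z. y \<in> M \<Longrightarrow> z \<in> M \<Longrightarrow> f (y + z) = f y + f z"
    and scale: "\<And>y c. y \<in> M \<Longrightarrow> f (c *\<^sub>R y) = c * f y"
    and bnd: "\<And>y. y \<in> M \<Longrightarrow> \<bar>f y\<bar> \<le> K * norm y"
  shows "\<exists>w\<in>M. \<forall>y\<in>M. w \<bullet> y = f y"
proof -
  define S where "S = (\<lambda>y. (y, - f y)) ` M"
  have "convex S"
    unfolding S_def using add scale by (intro convex_graph_linear_on_subspace[OF sub]) simp_all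
  have "(max K 0)-lipschitz_on M f"
  proof (rule lipschitz_onI)
    fix y z assume "y \<in> M" "z \<in> M"
    then have "f y - f z = f (y - z)" and "y - z \<in> M"
      using add[of "y - z" z] sub by (auto simp: subspace_diff)
    then have "dist (f y) (f z) \<le> K * dist y z"
      using bnd[of "y - z"] by (simp add: dist_norm)
    also have "\<dots> \<le> max K 0 * dist y z" by (intro mult_right_mono) auto
    finally show "dist (f y) (f z) \<le> max K 0 * dist y z" .
  qed simp
  then have "continuous_on M (\<lambda>y. - f y)"
    by (intro continuous_intros lipschitz_on_continuous_on)
  then have "closed S" unfolding S_def using cl by (rule continuous_closed_graph[rotated])
  moreover have "S \<noteq> {}" using subspace_0[OF sub] unfolding S_def by blast
  moreover have "- K\<^sup>2 / 2 \<le> (norm y)\<^sup>2 / 2 + r" if "(y, r) \<in> S" for y r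
  proof -
    have "f y \<le> K * norm y" "r = - f y" using that bnd unfolding S_def by fastforce+
    moreover have "0 \<le> (norm y - K)\<^sup>2" by simp
    ultimately show ?thesis by (simp add: power2_eq_square algebra_simps)
  qed
  ultimately obtain w r where wr: "(w, r) \<in> S"
    and min: "\<forall>(w', s')\<in>S. (norm w)\<^sup>2 / 2 + r \<le> (norm w')\<^sup>2 / 2 + s'"
    using convex_epigraph_attains_min_half_norm_sq[OF \<open>convex S\<close>] by blast
  have wM: "w \<in> M" and r: "r = - f w" using wr unfolding S_def by auto
  have "w \<bullet> y = f y" if yM: "y \<in> M" for y
  proof -
    have "(w + c *\<^sub>R y, - f (w + c *\<^sub>R y)) \<in> S" for c
      unfolding S_def using sub wM yM by (auto simp: subspace_add subspace_scale)
    from convex_epigraph_min_half_norm_sq_variational[OF \<open>convex S\<close> wr this min]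
    have "0 \<le> c * (w \<bullet> y - f y)" for c
      using add scale sub wM yM r by (simp add: subspace_scale algebra_simps)
    from this[of 1] this[of "-1"] show ?thesis by simp
  qed
  with wM show ?thesis by blast
qed

section \<open>Weak convergence\<close>

lemma weakly_converges_subseq:
  "weakly_converges s l \<Longrightarrow> strict_mono r \<Longrightarrow> weakly_converges (s \<circ> r) l"
  unfolding weakly_converges_def using LIMSEQ_subseq_LIMSEQ by (fastforce simp: o_def)

lemma weakly_converges_if_diff_null:
  assumes "weakly_converges s l" and "(\<lambda>n. t n - s n) \<longlonglongrightarrow> 0"
  shows "weakly_converges t l"
  unfolding weakly_converges_def
proof
  fix z
  have "(\<lambda>n. s n \<bullet> z) \<longlonglongrightarrow> l \<bullet> z" using assms(1) unfolding weakly_converges_def by blast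
  moreover have "(\<lambda>n. (t n - s n) \<bullet> z) \<longlonglongrightarrow> 0 \<bullet> z" by (intro tendsto_inner assms(2) tendsto_const)
  ultimately have "(\<lambda>n. s n \<bullet> z + (t n - s n) \<bullet> z) \<longlonglongrightarrow> l \<bullet> z + 0 \<bullet> z" by (rule tendsto_add)
  then show "(\<lambda>n. t n \<bullet> z) \<longlonglongrightarrow> l \<bullet> z" by (simp add: inner_diff_left)
qed

lemma bounded_subseq_inner_convergent:
  fixes s v :: "nat \<Rightarrow> 'a::real_inner"
  assumes bnd: "\<And>n. norm (s n) \<le> K"
  shows "\<exists>r. strict_mono r \<and> (\<forall>n. convergent (\<lambda>k. s (r k) \<bullet> v n))"
proof -
  interpret subseqs "\<lambda>n r. convergent (\<lambda>k. s (r k) \<bullet> v n)"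
  proof
    fix n and r :: "nat \<Rightarrow> nat" assume "strict_mono r"
    have "\<bar>s (r k) \<bullet> v n\<bar> \<le> K * norm (v n)" for k
      using abs_inner_le_bound[OF bnd] .
    then have "bounded (range (\<lambda>k. s (r k) \<bullet> v n))"
      unfolding bounded_iff by (auto intro!: exI[of _ "K * norm (v n)"])
    then obtain l r' where "strict_mono r'" "((\<lambda>k. s (r k) \<bullet> v n) \<circ> r') \<longlonglongrightarrow> l"
      using bounded_imp_convergent_subsequence by blast
    then show "\<exists>r'. strict_mono r' \<and> convergent (\<lambda>k. s ((r \<circ> r') k) \<bullet> v n)"
      by (auto simp: convergent_def o_def)
  qed
  have "convergent (\<lambda>k. s (diagseq k) \<bullet> v n)" for n
  proof -
    have "convergent (\<lambda>k. s ((diagseq \<circ> (+) (Suc n)) k) \<bullet> v n)"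
    proof (rule diagseq_holds)
      fix r r' :: "nat \<Rightarrow> nat" and n
      assume "strict_mono r" "convergent (\<lambda>k. s (r' k) \<bullet> v n)"
      from convergent_subseq_convergent[OF this(2,1)]
      show "convergent (\<lambda>k. s ((r' \<circ> r) k) \<bullet> v n)" by (simp add: o_def)
    qed
    then obtain l where "(\<lambda>k. s (diagseq (k + Suc n)) \<bullet> v n) \<longlonglongrightarrow> l"
      by (auto simp: convergent_def o_def add.commute)
    then show ?thesis unfolding convergent_def by (blast intro: LIMSEQ_offset)
  qed
  then show ?thesis using subseq_diagseq by blast
qed

lemma subspace_inner_convergent: "subspace {v. convergent (\<lambda>k. t k \<bullet> v)}"
  unfolding subspace_def
  by (auto simp: inner_add_right intro: convergent_add convergent_mult convergent_const)

lemma closed_inner_convergent: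
  fixes t :: "nat \<Rightarrow> 'a::real_inner"
  assumes bnd: "\<And>k. norm (t k) \<le> K"
  shows "closed {v. convergent (\<lambda>k. t k \<bullet> v)}"
  unfolding closed_sequential_limits
proof (intro allI impI, elim conjE)
  fix vs v assume conv: "\<forall>n. vs n \<in> {v. convergent (\<lambda>k. t k \<bullet> v)}" and lim: "vs \<longlonglongrightarrow> v"
  have inner_close: "\<bar>t k \<bullet> v - t k \<bullet> w\<bar> \<le> K * norm (w - v)" for k w
    using abs_inner_le_bound[OF bnd, of k "v - w"] by (simp add: inner_diff_right norm_minus_commute)
  have "Cauchy (\<lambda>k. t k \<bullet> v)"
  proof (rule metric_CauchyI)
    fix e :: real assume "e > 0"
    have "(\<lambda>n. norm (vs n - v)) \<longlonglongrightarrow> 0"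
      using lim by (simp add: LIM_zero_iff tendsto_norm_zero_iff)
    then have "(\<lambda>n. K * norm (vs n - v)) \<longlonglongrightarrow> 0" by (rule tendsto_mult_right_zero)
    from LIMSEQ_D[OF this, of "e / 3"] \<open>e > 0\<close>
    obtain j where "norm (K * norm (vs j - v) - 0) < e / 3" by auto
    then have j: "K * norm (vs j - v) < e / 3" by (simp add: abs_less_iff)
    have "Cauchy (\<lambda>k. t k \<bullet> vs j)" using conv Cauchy_convergent_iff by blast
    then obtain M where M: "\<And>m n. m \<ge> M \<Longrightarrow> n \<ge> M \<Longrightarrow> dist (t m \<bullet> vs j) (t n \<bullet> vs j) < e / 3"
      using \<open>e > 0\<close> unfolding Cauchy_def by (meson divide_pos_pos zero_less_numeral)
    have "dist (t m \<bullet> v) (t n \<bullet> v) < e" if "m \<ge> M" "n \<ge> M" for m n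
      using M[OF that] inner_close[of m "vs j"] inner_close[of n "vs j"] j
      unfolding dist_real_def by linarith
    then show "\<exists>M. \<forall>m\<ge>M. \<forall>n\<ge>M. dist (t m \<bullet> v) (t n \<bullet> v) < e" by blast
  qed
  then show "v \<in> {v. convergent (\<lambda>k. t k \<bullet> v)}" by (simp add: real_Cauchy_convergent)
qed

lemma weakly_convergent_if_inner_self_convergent:
  fixes t :: "nat \<Rightarrow> 'a::{real_inner,complete_space}"
  assumes bnd: "\<And>k. norm (t k) \<le> K" and conv: "\<And>j. convergent (\<lambda>k. t k \<bullet> t j)"
  shows "\<exists>l. weakly_converges t l"
proof -
  define G where "G = {v. convergent (\<lambda>k. t k \<bullet> v)}"
  define f where "f v = lim (\<lambda>k. t k \<bullet> v)" for v
  have sub: "subspace G" unfolding G_def by (rule subspace_inner_convergent)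
  have cl: "closed G" unfolding G_def using bnd by (rule closed_inner_convergent)
  have tG: "t k \<in> G" for k using conv by (simp add: G_def)
  have flim: "(\<lambda>k. t k \<bullet> v) \<longlonglongrightarrow> f v" if "v \<in> G" for v
    using that unfolding G_def f_def by (simp add: convergent_LIMSEQ_iff)
  have "\<exists>w\<in>G. \<forall>y\<in>G. w \<bullet> y = f y"
  proof (rule Riesz_representation_subspace[OF sub cl])
    fix y z assume "y \<in> G" "z \<in> G"
    then have "(\<lambda>k. t k \<bullet> (y + z)) \<longlonglongrightarrow> f y + f z"
      unfolding inner_add_right by (intro tendsto_add flim)
    moreover have "y + z \<in> G" using sub \<open>y \<in> G\<close> \<open>z \<in> G\<close> by (rule subspace_add)
    ultimately show "f (y + z) = f y + f z" using flim LIMSEQ_unique by blast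
  next
    fix y c assume "y \<in> G"
    then have "(\<lambda>k. t k \<bullet> (c *\<^sub>R y)) \<longlonglongrightarrow> c * f y"
      unfolding inner_scaleR_right by (intro tendsto_mult_left flim)
    moreover have "c *\<^sub>R y \<in> G" using sub \<open>y \<in> G\<close> by (rule subspace_scale)
    ultimately show "f (c *\<^sub>R y) = c * f y" using flim LIMSEQ_unique by blast
  next
    fix y assume "y \<in> G"
    then have "(\<lambda>k. \<bar>t k \<bullet> y\<bar>) \<longlonglongrightarrow> \<bar>f y\<bar>" by (intro tendsto_rabs flim)
    then show "\<bar>f y\<bar> \<le> K * norm y"
      by (rule LIMSEQ_le_const2) (auto intro: abs_inner_le_bound[OF bnd])
  qed
  then obtain w where wG: "w \<in> G" and wf: "\<And>y. y \<in> G \<Longrightarrow> w \<bullet> y = f y" by blast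
  have "(\<lambda>k. t k \<bullet> v) \<longlonglongrightarrow> w \<bullet> v" for v
  proof -
    obtain p where pG: "p \<in> G" and pv: "\<And>y. y \<in> G \<Longrightarrow> p \<bullet> y = v \<bullet> y"
      using Riesz_representation_subspace[OF sub cl, of "(\<bullet>) v" "norm v"]
      by (auto simp: inner_add_right Cauchy_Schwarz_ineq2)
    have "(\<lambda>k. t k \<bullet> p) \<longlonglongrightarrow> f p" by (rule flim[OF pG])
    moreover have "t k \<bullet> p = t k \<bullet> v" for k using pv[OF tG] by (simp add: inner_commute)
    moreover have "f p = w \<bullet> v" using wf[OF pG] pv[OF wG] by (simp add: inner_commute)
    ultimately show ?thesis by simp
  qed
  then show ?thesis unfolding weakly_converges_def by blast
qed

theorem bounded_imp_weakly_convergent_subseq: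
  fixes s :: "nat \<Rightarrow> 'a::{real_inner,complete_space}"
  assumes bnd: "\<And>n. norm (s n) \<le> K"
  shows "\<exists>r l. strict_mono r \<and> weakly_converges (s \<circ> r) l"
proof -
  obtain r where r: "strict_mono r" and conv: "\<And>n. convergent (\<lambda>k. s (r k) \<bullet> s n)"
    using bounded_subseq_inner_convergent[where s = s and v = s and K = K] bnd by blast
  have "\<exists>l. weakly_converges (s \<circ> r) l"
    using bnd conv by (intro weakly_convergent_if_inner_self_convergent[where K = K]) simp_all
  with r show ?thesis by blast
qed

lemma tendsto_inner_bounded_null:
  fixes s f :: "nat \<Rightarrow> 'a::real_inner"
  assumes bnd: "\<And>n. norm (s n) \<le> K" and f: "f \<longlonglongrightarrow> 0"
  shows "(\<lambda>n. s n \<bullet> f n) \<longlonglongrightarrow> 0"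
proof (rule tendsto_0_le[OF f, where K = K])
  show "\<forall>\<^sub>F n in sequentially. norm (s n \<bullet> f n) \<le> norm (f n) * K"
    using abs_inner_le_bound[OF bnd] by (simp add: mult.commute)
qed

text \<open>The products X k \<bullet> U k of two merely weakly convergent sequences need not converge; in
  this combination they only enter through (Y k - X k) \<bullet> U k.\<close>
lemma tendsto_skew_pairing:
  fixes X Y U E :: "nat \<Rightarrow> 'a::real_inner"
  assumes wX: "weakly_converges X x" and wU: "weakly_converges U u"
    and YX: "(\<lambda>k. Y k - X k) \<longlonglongrightarrow> 0" and E: "E \<longlonglongrightarrow> 0"
    and bX: "\<And>k. norm (X k) \<le> KX" and bU: "\<And>k. norm (U k) \<le> KU"
  shows "(\<lambda>k. (X k - p) \<bullet> (E k - U k - c) + (Y k - q) \<bullet> (U k - v))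
    \<longlonglongrightarrow> (x - p) \<bullet> (- u - c) + (x - q) \<bullet> (u - v)"
proof -
  have X: "(\<lambda>k. X k \<bullet> z) \<longlonglongrightarrow> x \<bullet> z" and U: "(\<lambda>k. U k \<bullet> z) \<longlonglongrightarrow> u \<bullet> z" for z
    using wX wU unfolding weakly_converges_def by blast+
  have "(\<lambda>k. X k \<bullet> E k - p \<bullet> E k + U k \<bullet> (Y k - X k) + U k \<bullet> (p - q) - X k \<bullet> (c + v)
      - (Y k - X k) \<bullet> v + p \<bullet> c + q \<bullet> v)
    \<longlonglongrightarrow> 0 - p \<bullet> 0 + 0 + u \<bullet> (p - q) - x \<bullet> (c + v) - 0 \<bullet> v + p \<bullet> c + q \<bullet> v"
    by (intro tendsto_add tendsto_diff X U tendsto_const tendsto_inner_bounded_null[OF bX E]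
        tendsto_inner_bounded_null[OF bU YX] tendsto_inner[OF tendsto_const E]
        tendsto_inner[OF YX tendsto_const])
  moreover have "X k \<bullet> E k - p \<bullet> E k + U k \<bullet> (Y k - X k) + U k \<bullet> (p - q) - X k \<bullet> (c + v)
      - (Y k - X k) \<bullet> v + p \<bullet> c + q \<bullet> v = (X k - p) \<bullet> (E k - U k - c) + (Y k - q) \<bullet> (U k - v)" for k
    by (simp add: inner_diff_left inner_diff_right inner_add_right inner_commute algebra_simps)
  moreover have "0 - p \<bullet> 0 + 0 + u \<bullet> (p - q) - x \<bullet> (c + v) - 0 \<bullet> v + p \<bullet> c + q \<bullet> v
      = (x - p) \<bullet> (- u - c) + (x - q) \<bullet> (u - v)"
    by (simp add: inner_diff_left inner_diff_right inner_add_right inner_commute algebra_simps)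
  ultimately show ?thesis by simp
qed

theorem weakly_converges_if_weak_cluster_points_eq:
  fixes s :: "nat \<Rightarrow> 'a::{real_inner,complete_space}"
  assumes bnd: "\<And>n. norm (s n) \<le> K"
    and cluster: "\<And>r l. strict_mono r \<Longrightarrow> weakly_converges (s \<circ> r) l \<Longrightarrow> l = l0"
  shows "weakly_converges s l0"
  unfolding weakly_converges_def
proof
  fix z
  show "(\<lambda>n. s n \<bullet> z) \<longlonglongrightarrow> l0 \<bullet> z"
  proof (rule ccontr)
    assume "\<not> ?thesis"
    then obtain e where "e > 0" and far: "\<forall>N. \<exists>n\<ge>N. e \<le> dist (s n \<bullet> z) (l0 \<bullet> z)"
      unfolding lim_sequentially by (auto simp: not_less)
    define I where "I = {n. e \<le> dist (s n \<bullet> z) (l0 \<bullet> z)}"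
    have "infinite I" unfolding infinite_nat_iff_unbounded_le I_def using far by blast
    then have r: "strict_mono (enumerate I)" and rI: "\<And>k. enumerate I k \<in> I"
      by (simp_all add: strict_mono_enumerate enumerate_in_set)
    obtain r' l where r': "strict_mono r'" and l: "weakly_converges (s \<circ> enumerate I \<circ> r') l"
      using bounded_imp_weakly_convergent_subseq[of "s \<circ> enumerate I" K] bnd by auto
    have "l = l0" using cluster[OF strict_mono_o[OF r r'] l[folded o_assoc]] .
    with l \<open>e > 0\<close> obtain N where "dist (s (enumerate I (r' N)) \<bullet> z) (l0 \<bullet> z) < e"
      unfolding weakly_converges_def lim_sequentially by fastforce
    with rI[of "r' N"] show False unfolding I_def by simp
  qed
qed

section \<open>Maximally monotone operators\<close>

lemma maximally_monotone_monotone: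
  "maximally_monotone A \<Longrightarrow> v \<in> A y \<Longrightarrow> v' \<in> A y' \<Longrightarrow> 0 \<le> (y - y') \<bullet> (v - v')"
  unfolding maximally_monotone_def monotone_op_def by blast

lemma maximally_monotoneD:
  "maximally_monotone A \<Longrightarrow> (\<And>y v. v \<in> A y \<Longrightarrow> 0 \<le> (x - y) \<bullet> (u - v)) \<Longrightarrow> u \<in> A x"
  unfolding maximally_monotone_def by blast

lemma maximally_monotone_graph_nonempty:
  assumes "maximally_monotone A"
  shows "\<exists>y v. v \<in> A y"
proof (rule ccontr)
  assume empty: "\<nexists>y v. v \<in> A y"
  then have "0 \<in> A 0" by (intro maximally_monotoneD[OF assms]) auto
  with empty show False by blast
qed

text \<open>The epigraph of the Fitzpatrick function
  F_A (x, u) = sup {x \<bullet> v + y \<bullet> u - y \<bullet> v | v \<in> A y}.\<close>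
definition fitzpatrick_epigraph :: "('a::real_inner \<Rightarrow> 'a set) \<Rightarrow> (('a \<times> 'a) \<times> real) set" where
  "fitzpatrick_epigraph A =
     {z. \<forall>y v. v \<in> A y \<longrightarrow> fst (fst z) \<bullet> v + y \<bullet> snd (fst z) - y \<bullet> v \<le> snd z}"

lemma mem_fitzpatrick_epigraph:
  "((x, u), r) \<in> fitzpatrick_epigraph A \<longleftrightarrow> (\<forall>y v. v \<in> A y \<longrightarrow> x \<bullet> v + y \<bullet> u - y \<bullet> v \<le> r)"
  by (simp add: fitzpatrick_epigraph_def)

lemma convex_fitzpatrick_epigraph: "convex (fitzpatrick_epigraph A)"
  unfolding convex_def
proof (intro ballI allI impI)
  fix z z' and a b :: real
  assume z: "z \<in> fitzpatrick_epigraph A" "z' \<in> fitzpatrick_epigraph A" and ab: "0 \<le> a" "0 \<le> b" "a + b = 1"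
  show "a *\<^sub>R z + b *\<^sub>R z' \<in> fitzpatrick_epigraph A"
    unfolding fitzpatrick_epigraph_def
  proof (intro CollectI allI impI)
    fix y v assume "v \<in> A y"
    then have "fst (fst z) \<bullet> v + y \<bullet> snd (fst z) - y \<bullet> v \<le> snd z"
      "fst (fst z') \<bullet> v + y \<bullet> snd (fst z') - y \<bullet> v \<le> snd z'"
      using z unfolding fitzpatrick_epigraph_def by blast+
    then have "a * (fst (fst z) \<bullet> v + y \<bullet> snd (fst z) - y \<bullet> v)
        + b * (fst (fst z') \<bullet> v + y \<bullet> snd (fst z') - y \<bullet> v) \<le> a * snd z + b * snd z'"
      using ab by (intro add_mono mult_left_mono) auto
    moreover have "a * (y \<bullet> v) + b * (y \<bullet> v) = y \<bullet> v"
      using ab(3) by (simp flip: distrib_right)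
    ultimately show "fst (fst (a *\<^sub>R z + b *\<^sub>R z')) \<bullet> v + y \<bullet> snd (fst (a *\<^sub>R z + b *\<^sub>R z'))
        - y \<bullet> v \<le> snd (a *\<^sub>R z + b *\<^sub>R z')"
      by (simp add: inner_add_left inner_add_right algebra_simps)
  qed
qed

lemma closed_fitzpatrick_epigraph: "closed (fitzpatrick_epigraph A)"
  unfolding fitzpatrick_epigraph_def
  by (intro closed_Collect_all closed_Collect_imp open_Collect_const closed_Collect_le continuous_intros)

lemma graph_mem_fitzpatrick_epigraph:
  assumes mono: "monotone_op A" and yv: "v \<in> A y"
  shows "((y, v), y \<bullet> v) \<in> fitzpatrick_epigraph A"
proof -
  have "y \<bullet> v' + y' \<bullet> v - y' \<bullet> v' \<le> y \<bullet> v" if "v' \<in> A y'" for y' v'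
    using mono yv that unfolding monotone_op_def
    by (fastforce simp: inner_diff_left inner_diff_right inner_commute)
  then show ?thesis by (simp add: mem_fitzpatrick_epigraph)
qed

lemma fitzpatrick_epigraph_inner_le:
  assumes mm: "maximally_monotone A" and xur: "((x, u), r) \<in> fitzpatrick_epigraph A"
  shows "x \<bullet> u \<le> r"
proof (cases "u \<in> A x")
  case True
  then show ?thesis using xur by (force simp: mem_fitzpatrick_epigraph)
next
  case False
  then obtain y v where "v \<in> A y" "(x - y) \<bullet> (u - v) < 0"
    using maximally_monotoneD[OF mm, of x u] by force
  then show ?thesis
    using xur by (force simp: mem_fitzpatrick_epigraph inner_diff_left inner_diff_right inner_commute)
qed

text \<open>Minimising F_A plus half the squared norm over H \<times> H: at the minimiser (x, u) the
  first-order condition says that (- u, - x) is monotonically related to the graph of A.\<close>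
lemma maximally_monotone_minus_fixpoint:
  fixes A :: "'a::{real_inner,complete_space} \<Rightarrow> 'a set"
  assumes mm: "maximally_monotone A"
  shows "\<exists>p. - p \<in> A p"
proof -
  define S where "S = fitzpatrick_epigraph A"
  have mono: "monotone_op A" using mm unfolding maximally_monotone_def by blast
  have "0 \<le> (norm z)\<^sup>2 / 2 + r" if "(z, r) \<in> S" for z r
  proof -
    obtain x u where z: "z = (x, u)" by fastforce
    have "x \<bullet> u \<le> r" using fitzpatrick_epigraph_inner_le[OF mm] that z by (simp add: S_def)
    moreover have "(norm z)\<^sup>2 = (norm x)\<^sup>2 + (norm u)\<^sup>2" unfolding z norm_Pair by simp
    moreover have "0 \<le> (norm (x + u))\<^sup>2" by simp
    ultimately show ?thesis unfolding norm_add_sq by linarith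
  qed
  moreover have "S \<noteq> {}"
    using maximally_monotone_graph_nonempty[OF mm] graph_mem_fitzpatrick_epigraph[OF mono]
    unfolding S_def by blast
  ultimately have "\<exists>(z, r)\<in>S. \<forall>(w, s)\<in>S. (norm z)\<^sup>2 / 2 + r \<le> (norm w)\<^sup>2 / 2 + s"
    unfolding S_def
    by (intro convex_epigraph_attains_min_half_norm_sq convex_fitzpatrick_epigraph
        closed_fitzpatrick_epigraph)
  then obtain x u r where S_xu: "((x, u), r) \<in> S"
    and min: "\<forall>(w, s)\<in>S. (norm (x, u))\<^sup>2 / 2 + r \<le> (norm w)\<^sup>2 / 2 + s"
    by auto
  have "x \<bullet> u \<le> r" using fitzpatrick_epigraph_inner_le[OF mm] S_xu by (simp add: S_def)
  have key: "(norm (x + u))\<^sup>2 \<le> (- u - y) \<bullet> (- x - v)" if "v \<in> A y" for y v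
  proof -
    have "0 \<le> (x, u) \<bullet> ((y, v) - (x, u)) + (y \<bullet> v - r)"
      using convex_epigraph_min_half_norm_sq_variational[OF _ S_xu _ min]
        convex_fitzpatrick_epigraph graph_mem_fitzpatrick_epigraph[OF mono that]
      unfolding S_def by blast
    then have "0 \<le> x \<bullet> y - (norm x)\<^sup>2 + u \<bullet> v - (norm u)\<^sup>2 + (y \<bullet> v - r)"
      by (simp add: inner_diff_right power2_norm_eq_inner)
    moreover have "(- u - y) \<bullet> (- x - v) = u \<bullet> x + u \<bullet> v + y \<bullet> x + y \<bullet> v"
      by (simp add: inner_diff_left inner_diff_right)
    ultimately show ?thesis
      using \<open>x \<bullet> u \<le> r\<close> inner_commute[of y x] inner_commute[of u x] unfolding norm_add_sq
      by linarith
  qed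
  have "- x \<in> A (- u)"
  proof (rule maximally_monotoneD[OF mm])
    fix y v assume "v \<in> A y"
    from key[OF this] show "0 \<le> (- u - y) \<bullet> (- x - v)"
      using zero_le_power2[of "norm (x + u)"] by linarith
  qed
  from key[OF this] have "x + u = 0" by simp
  then have "u = - x" by (simp add: eq_neg_iff_add_eq_0 add.commute)
  with \<open>- x \<in> A (- u)\<close> show ?thesis by auto
qed

lemma maximally_monotone_shift_scale:
  assumes mm: "maximally_monotone A" and c: "c > 0"
  shows "maximally_monotone (\<lambda>q. (\<lambda>a. c *\<^sub>R a) ` A (q + w))"
  unfolding maximally_monotone_def monotone_op_def
proof (intro conjI allI impI)
  fix x y u v assume "u \<in> (*\<^sub>R) c ` A (x + w)" "v \<in> (*\<^sub>R) c ` A (y + w)"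
  then obtain a b where ab: "a \<in> A (x + w)" "b \<in> A (y + w)" "u = c *\<^sub>R a" "v = c *\<^sub>R b"
    by blast
  have "0 \<le> c * ((x + w - (y + w)) \<bullet> (a - b))"
    using maximally_monotone_monotone[OF mm ab(1,2)] c by simp
  then show "0 \<le> (x - y) \<bullet> (u - v)"
    using ab by (simp add: scaleR_diff_right[symmetric])
next
  fix x u assume rel: "\<forall>y v. v \<in> (*\<^sub>R) c ` A (y + w) \<longrightarrow> 0 \<le> (x - y) \<bullet> (u - v)"
  have "(1 / c) *\<^sub>R u \<in> A (x + w)"
  proof (rule maximally_monotoneD[OF mm])
    fix y b assume "b \<in> A y"
    then have "0 \<le> (x - (y - w)) \<bullet> (u - c *\<^sub>R b)" using rel by force
    also have "(x - (y - w)) \<bullet> (u - c *\<^sub>R b) = c * ((x + w - y) \<bullet> ((1 / c) *\<^sub>R u - b))"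
      using c by (simp add: algebra_simps inner_diff_right)
    finally show "0 \<le> (x + w - y) \<bullet> ((1 / c) *\<^sub>R u - b)"
      using c by (simp add: zero_le_mult_iff)
  qed
  then show "u \<in> (*\<^sub>R) c ` A (x + w)"
    using c by (intro image_eqI[of _ _ "(1 / c) *\<^sub>R u"]) auto
qed

theorem maximally_monotone_resolvent_domain:
  fixes A :: "'a::{real_inner,complete_space} \<Rightarrow> 'a set"
  assumes mm: "maximally_monotone A" and c: "c > 0"
  shows "\<exists>p. \<exists>a\<in>A p. w = p + c *\<^sub>R a"
proof -
  obtain q where "- q \<in> (*\<^sub>R) c ` A (q + w)"
    using maximally_monotone_minus_fixpoint[OF maximally_monotone_shift_scale[OF mm c]] by blast
  then obtain a where a: "a \<in> A (q + w)" and "c *\<^sub>R a = - q" by (metis imageE)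
  then have "w = (q + w) + c *\<^sub>R a" by simp
  with a show ?thesis by blast
qed

lemma resolvent_residual_mem:
  fixes A :: "'a::{real_inner,complete_space} \<Rightarrow> 'a set"
  assumes mm: "maximally_monotone A" and c: "c > 0"
  shows "(1 / c) *\<^sub>R (w - resolvent c A w) \<in> A (resolvent c A w)"
proof -
  have "\<exists>!p. \<exists>a\<in>A p. w = p + c *\<^sub>R a"
  proof (rule ex_ex1I)
    show "\<exists>p. \<exists>a\<in>A p. w = p + c *\<^sub>R a" by (rule maximally_monotone_resolvent_domain[OF mm c])
  next
    fix p1 p2 assume "\<exists>a\<in>A p1. w = p1 + c *\<^sub>R a" "\<exists>a\<in>A p2. w = p2 + c *\<^sub>R a"
    then obtain a1 a2 where a: "a1 \<in> A p1" "a2 \<in> A p2" and w: "w = p1 + c *\<^sub>R a1" "w = p2 + c *\<^sub>R a2"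
      by blast
    then have p: "p1 - p2 = c *\<^sub>R (a2 - a1)" by (simp add: algebra_simps)
    have "0 \<le> (p1 - p2) \<bullet> (a1 - a2)" by (rule maximally_monotone_monotone[OF mm a])
    also have "\<dots> = - c * (norm (a1 - a2))\<^sup>2"
      unfolding p power2_norm_eq_inner by (simp add: inner_diff_left inner_diff_right algebra_simps)
    finally have "(norm (a1 - a2))\<^sup>2 \<le> 0" using c by (simp add: mult_le_0_iff)
    then have "a1 = a2" by simp
    with p show "p1 = p2" by simp
  qed
  then have "\<exists>a\<in>A (resolvent c A w). w = resolvent c A w + c *\<^sub>R a"
    unfolding resolvent_def by (rule theI')
  then obtain a where "a \<in> A (resolvent c A w)" "w - resolvent c A w = c *\<^sub>R a"
    by (auto simp: algebra_simps)
  then show ?thesis using c by simp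
qed

lemma maximally_monotone_exists_pairing_nonpos:
  fixes A :: "'a::{real_inner,complete_space} \<Rightarrow> 'a set"
  assumes mm: "maximally_monotone A"
  shows "\<exists>q v. v \<in> A q \<and> (x - q) \<bullet> (u - v) \<le> 0"
proof -
  define q where "q = resolvent 1 A (x + u)"
  have "x + u - q \<in> A q" using resolvent_residual_mem[OF mm, of 1 "x + u"] by (simp add: q_def)
  moreover have "(x - q) \<bullet> (u - (x + u - q)) = - (norm (x - q))\<^sup>2"
    by (simp add: power2_norm_eq_inner inner_diff_right inner_commute)
  ultimately show ?thesis by (metis neg_le_0_iff_le zero_le_power2)
qed

text \<open>The resolvent point p of step size t = 1 / (\<bar>K\<bar> + 1) below is forced to coincide with x.\<close>
lemma maximally_monotone_add_lipschitz_mem: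
  fixes A :: "'a::{real_inner,complete_space} \<Rightarrow> 'a set"
  assumes mm: "maximally_monotone A"
    and lip: "\<And>a b. norm (D a - D b) \<le> K * norm (a - b)"
    and rel: "\<And>p a. a \<in> A p \<Longrightarrow> 0 \<le> (x - p) \<bullet> (w - (a + D p))"
  shows "w - D x \<in> A x"
proof -
  define t where "t = 1 / (\<bar>K\<bar> + 1)"
  have t: "t > 0" by (simp add: t_def add_pos_nonneg)
  define p where "p = resolvent t A (x - t *\<^sub>R (D x - w))"
  define a where "a = (1 / t) *\<^sub>R (x - t *\<^sub>R (D x - w) - p)"
  have a: "a \<in> A p" unfolding a_def p_def by (rule resolvent_residual_mem[OF mm t])
  have xp: "x - p = t *\<^sub>R (a + D x - w)" unfolding a_def using t by (simp add: algebra_simps)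
  have "0 \<le> (x - p) \<bullet> (w - (a + D p))" by (rule rel[OF a])
  also have "\<dots> = (x - p) \<bullet> (D x - D p) - (1 / t) * (norm (x - p))\<^sup>2"
  proof -
    have "w - (a + D p) = (D x - D p) - (1 / t) *\<^sub>R (x - p)"
      unfolding a_def using t by (simp add: algebra_simps)
    then show ?thesis
      by (simp only: inner_diff_right[of "x - p" "D x - D p"] inner_scaleR_right power2_norm_eq_inner)
  qed
  also have "\<dots> \<le> \<bar>K\<bar> * (norm (x - p))\<^sup>2 - (\<bar>K\<bar> + 1) * (norm (x - p))\<^sup>2"
  proof -
    have "(x - p) \<bullet> (D x - D p) \<le> norm (x - p) * (K * norm (x - p))"
      by (rule order_trans[OF norm_cauchy_schwarz mult_left_mono[OF lip norm_ge_zero]])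
    also have "\<dots> = K * (norm (x - p))\<^sup>2" by (simp add: power2_eq_square)
    also have "\<dots> \<le> \<bar>K\<bar> * (norm (x - p))\<^sup>2" by (intro mult_right_mono) auto
    finally show ?thesis by (simp add: t_def)
  qed
  finally have "(norm (x - p))\<^sup>2 \<le> 0" by (simp add: algebra_simps)
  then have "x - p = 0" by simp
  then have "a + D x - w = 0" using xp t by simp
  then have "a = w - D x" by (simp add: algebra_simps)
  with a \<open>x - p = 0\<close> show ?thesis by simp
qed

lemma cocoercive_monotone:
  "\<beta> > 0 \<Longrightarrow> cocoercive \<beta> C \<Longrightarrow> 0 \<le> (x - y) \<bullet> (C x - C y)"
  unfolding cocoercive_def by (meson order_trans less_imp_le mult_nonneg_nonneg zero_le_power2)

lemma cocoercive_lipschitz: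
  assumes "\<beta> > 0" "cocoercive \<beta> C"
  shows "norm (C x - C y) \<le> (1 / \<beta>) * norm (x - y)"
proof -
  have "\<beta> * (norm (C x - C y))\<^sup>2 \<le> norm (x - y) * norm (C x - C y)"
    using assms(2) norm_cauchy_schwarz[of "x - y" "C x - C y"]
    unfolding cocoercive_def by (meson order_trans)
  then have "\<beta> * norm (C x - C y) \<le> norm (x - y)"
    by (cases "C x = C y") (auto simp: power2_eq_square)
  with assms(1) show ?thesis by (simp add: field_simps)
qed

section \<open>A quadratic form on H \<times> H\<close>

definition qform :: "real \<Rightarrow> real \<Rightarrow> 'a::real_inner \<Rightarrow> 'a \<Rightarrow> real" where
  "qform k lam a b = k * (norm a)\<^sup>2 - 2 * (a \<bullet> b) + lam * (norm b)\<^sup>2"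

lemma qform_mono: "k \<le> k' \<Longrightarrow> qform k lam a b \<le> qform k' lam a b"
  unfolding qform_def by (simp add: mult_right_mono)

lemma qform_ge_left:
  assumes "lam > 0"
  shows "(k - 1 / lam) * (norm a)\<^sup>2 \<le> qform k lam a b"
proof -
  have "0 \<le> lam * (norm (b - (1 / lam) *\<^sub>R a))\<^sup>2" using assms by simp
  also have "\<dots> = lam * (norm b)\<^sup>2 - 2 * (a \<bullet> b) + (norm a)\<^sup>2 / lam"
    using assms unfolding norm_diff_sq by (simp add: inner_commute power2_eq_square field_simps)
  finally show ?thesis unfolding qform_def by (simp add: algebra_simps)
qed

lemma qform_ge_right:
  assumes "k > 0"
  shows "(lam - 1 / k) * (norm b)\<^sup>2 \<le> qform k lam a b"
  using qform_ge_left[OF assms, of lam b a] by (simp add: qform_def inner_commute algebra_simps)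

lemma qform_diff:
  "qform k lam (a - p) (b - q)
    = qform k lam a b - 2 * (k * (a \<bullet> p) - a \<bullet> q - b \<bullet> p + lam * (b \<bullet> q)) + qform k lam p q"
  unfolding qform_def norm_diff_sq by (simp add: inner_diff_left inner_diff_right inner_commute algebra_simps)

text \<open>Opial's argument for the positive definite form qform: the difference of the (convergent)
  qform-distances to two cluster points is affine in the iterate, hence weakly continuous.\<close>
theorem weak_cluster_points_eq_if_qform_dist_convergent:
  fixes x u :: "nat \<Rightarrow> 'a::real_inner"
  assumes lam: "lam > 0" "1 / lam < k"
    and conv1: "convergent (\<lambda>n. qform k lam (x n - p1) (u n - q1))"
    and conv2: "convergent (\<lambda>n. qform k lam (x n - p2) (u n - q2))"
    and r1: "strict_mono r1" "weakly_converges (x \<circ> r1) p1" "weakly_converges (u \<circ> r1) q1"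
    and r2: "strict_mono r2" "weakly_converges (x \<circ> r2) p2" "weakly_converges (u \<circ> r2) q2"
  shows "p1 = p2"
proof -
  define L where "L a b = k * (a \<bullet> (p1 - p2)) - a \<bullet> (q1 - q2) - b \<bullet> (p1 - p2) + lam * (b \<bullet> (q1 - q2))"
    for a b
  have L_eq: "L a b = (qform k lam (a - p2) (b - q2) - qform k lam (a - p1) (b - q1)
      + qform k lam p1 q1 - qform k lam p2 q2) / 2" for a b
    unfolding L_def qform_diff by (simp add: inner_diff_right algebra_simps)
  obtain l1 l2 where "(\<lambda>n. qform k lam (x n - p1) (u n - q1)) \<longlonglongrightarrow> l1"
    and "(\<lambda>n. qform k lam (x n - p2) (u n - q2)) \<longlonglongrightarrow> l2"
    using conv1 conv2 unfolding convergent_def by blast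
  then have "(\<lambda>n. L (x n) (u n))
      \<longlonglongrightarrow> (l2 - l1 + qform k lam p1 q1 - qform k lam p2 q2) / 2"
    unfolding L_eq by (intro tendsto_intros) auto
  then obtain l where "(\<lambda>n. L (x n) (u n)) \<longlonglongrightarrow> l" by blast
  then have lim: "(\<lambda>n. L (x (r n)) (u (r n))) \<longlonglongrightarrow> l" if "strict_mono r" for r
    using LIMSEQ_subseq_LIMSEQ[OF _ that] by (auto simp: o_def)
  have L_lim: "L p q = l" if "strict_mono r" "weakly_converges (x \<circ> r) p" "weakly_converges (u \<circ> r) q"
    for r p q
  proof -
    have "(\<lambda>n. x (r n) \<bullet> z) \<longlonglongrightarrow> p \<bullet> z" "(\<lambda>n. u (r n) \<bullet> z) \<longlonglongrightarrow> q \<bullet> z" for z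
      using that(2,3) unfolding weakly_converges_def by auto
    then have "(\<lambda>n. L (x (r n)) (u (r n))) \<longlonglongrightarrow> L p q"
      unfolding L_def by (intro tendsto_add tendsto_diff tendsto_mult_left)
    then show ?thesis using lim[OF that(1)] by (rule LIMSEQ_unique)
  qed
  have "qform k lam (p1 - p2) (q1 - q2) = L p1 q1 - L p2 q2"
    unfolding L_def qform_def power2_norm_eq_inner
    by (simp add: inner_diff_left inner_diff_right inner_commute algebra_simps)
  also have "\<dots> = 0" using L_lim[OF r1] L_lim[OF r2] by simp
  finally have "(k - 1 / lam) * (norm (p1 - p2))\<^sup>2 \<le> 0"
    using qform_ge_left[OF lam(1), of k "p1 - p2" "q1 - q2"] by simp
  with lam show ?thesis by (simp add: mult_le_0_iff)
qed

section \<open>The splitting iteration\<close>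

lemma tendsto_zero_if_sq_sums_bounded:
  fixes f :: "nat \<Rightarrow> 'a::real_normed_vector"
  assumes c: "c > 0" and f: "\<And>n. c * (norm (f n))\<^sup>2 \<le> r n" and sums: "\<And>n. (\<Sum>k<n. r k) \<le> M"
  shows "f \<longlonglongrightarrow> 0"
proof -
  have "summable (\<lambda>n. (norm (f n))\<^sup>2)"
  proof (rule summableI_nonneg_bounded[where x = "M / c"])
    fix n
    have "(\<Sum>k<n. (norm (f k))\<^sup>2) = (\<Sum>k<n. c * (norm (f k))\<^sup>2) / c"
      using c by (simp add: sum_divide_distrib)
    also have "\<dots> \<le> (\<Sum>k<n. r k) / c"
      using c by (intro divide_right_mono sum_mono f) auto
    also have "\<dots> \<le> M / c"
      using c by (intro divide_right_mono sums) auto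
    finally show "(\<Sum>k<n. (norm (f k))\<^sup>2) \<le> M / c" .
  qed simp
  then have "(\<lambda>n. sqrt ((norm (f n))\<^sup>2)) \<longlonglongrightarrow> sqrt 0"
    by (intro tendsto_intros summable_LIMSEQ_zero)
  then show ?thesis by (simp add: tendsto_norm_zero_iff)
qed

lemma young_inner:
  fixes d c :: "'a::real_inner"
  assumes "\<beta> > 0"
  shows "- 2 * (d \<bullet> c) \<le> 2 * \<beta> * (norm c)\<^sup>2 + (norm d)\<^sup>2 / (2 * \<beta>)"
proof -
  have "0 \<le> (norm (d + (2 * \<beta>) *\<^sub>R c))\<^sup>2 / (2 * \<beta>)" using assms by simp
  also have "\<dots> = (norm d)\<^sup>2 / (2 * \<beta>) + 2 * (d \<bullet> c) + 2 * \<beta> * (norm c)\<^sup>2"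
    using assms unfolding norm_add_sq by (simp add: power_mult_distrib field_simps power2_eq_square)
  finally show ?thesis by linarith
qed

text \<open>In the application X = x n - p and U = u n - q for a Kuhn-Tucker point (p, q), d and e
  are the increments of x and u, bn = B (x n) - B (x (n - 1)), bS = B (x (n + 1)) - B (x n),
  Bd = B (x (n + 1)) - B p and c = C (x n) - C p.\<close>
lemma lyapunov_step_estimate:
  fixes X U d e bn bS Bd c :: "'a::real_inner"
  assumes \<beta>: "\<beta> > 0" and L: "L \<ge> 0"
    and A2: "0 \<le> (X + d) \<bullet> (- k *\<^sub>R d - U - Bd + bS - bn - c)"
    and A1: "0 \<le> (X + 2 *\<^sub>R d - lam *\<^sub>R e) \<bullet> (U + e)"
    and B: "0 \<le> (X + d) \<bullet> Bd"
    and C: "\<beta> * (norm c)\<^sup>2 \<le> X \<bullet> c"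
    and lip: "\<bar>d \<bullet> bn\<bar> \<le> L * norm d * w"
  shows "qform k lam (X + d) (U + e) - 2 * ((X + d) \<bullet> bS) + L * (norm d)\<^sup>2
    \<le> qform k lam X U - 2 * (X \<bullet> bn) + L * w\<^sup>2 - qform (k - 2 * L - 1 / (2 * \<beta>)) lam d e"
proof -
  have "2 * (norm d * w) \<le> (norm d)\<^sup>2 + w\<^sup>2" using sum_squares_bound[of "norm d" w] by simp
  then have "L * (2 * (norm d * w)) \<le> L * ((norm d)\<^sup>2 + w\<^sup>2)" using L by (rule mult_left_mono)
  then have bn: "- 2 * (d \<bullet> bn) \<le> L * (norm d)\<^sup>2 + L * w\<^sup>2" using lip by (simp add: algebra_simps)
  have "qform k lam (X + d) (U + e) - 2 * ((X + d) \<bullet> bS) + L * (norm d)\<^sup>2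
      - (qform k lam X U - 2 * (X \<bullet> bn) + L * w\<^sup>2 - qform (k - 2 * L - 1 / (2 * \<beta>)) lam d e)
    = - 2 * ((X + d) \<bullet> (- k *\<^sub>R d - U - Bd + bS - bn - c))
      - 2 * ((X + 2 *\<^sub>R d - lam *\<^sub>R e) \<bullet> (U + e)) - 2 * ((X + d) \<bullet> Bd)
      - 2 * (d \<bullet> bn) - 2 * (X \<bullet> c) - 2 * (d \<bullet> c) - L * (norm d)\<^sup>2 - L * w\<^sup>2 - (norm d)\<^sup>2 / (2 * \<beta>)"
    unfolding qform_def power2_norm_eq_inner using \<beta>
    by (simp add: inner_add_left inner_add_right inner_diff_left inner_diff_right inner_commute
        algebra_simps)
  then show ?thesis using A2 A1 B C bn young_inner[OF \<beta>, of d c] by linarith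
qed

locale four_operator_splitting =
  fixes A1 A2 :: "'a::{real_inner, complete_space} \<Rightarrow> 'a set"
    and B C :: "'a \<Rightarrow> 'a"
    and L \<beta> lam gam :: real
    and xm1 :: 'a
    and x y u :: "nat \<Rightarrow> 'a"
  assumes A1: "maximally_monotone A1"
    and A2: "maximally_monotone A2"
    and B_monotone: "monotone_fun B"
    and L_pos: "L > 0"
    and B_lipschitz: "L-lipschitz_on UNIV B"
    and \<beta>_pos: "\<beta> > 0"
    and C_cocoercive: "cocoercive \<beta> C"
    and zer_nonempty: "zer (op_sum4 A1 A2 B C) \<noteq> {}"
    and lam_pos: "lam > 0"
    and gam_pos: "gam > 0"
    and gam_bound: "gam < lam * \<beta> / (\<beta> + lam * (2 * \<beta> * L + 1))"
    and x_rec: "\<And>n. x (Suc n) = resolvent gam A2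
        (x n - gam *\<^sub>R u n
             - gam *\<^sub>R (2 *\<^sub>R B (x n) - B (if n = 0 then xm1 else x (n - 1)))
             - gam *\<^sub>R C (x n))"
    and y_rec: "\<And>n. y (Suc n) = resolvent lam A1 (2 *\<^sub>R x (Suc n) - x n + lam *\<^sub>R u n)"
    and u_rec: "\<And>n. u (Suc n) = u n + (1 / lam) *\<^sub>R (2 *\<^sub>R x (Suc n) - x n - y (Suc n))"
begin

definition x_prev :: "nat \<Rightarrow> 'a" where "x_prev n = (if n = 0 then xm1 else x (n - 1))"

lemma x_prev_Suc [simp]: "x_prev (Suc n) = x n"
  by (simp add: x_prev_def)

definition a2 :: "nat \<Rightarrow> 'a" where
  "a2 n = (1 / gam) *\<^sub>R (x n - x (Suc n)) - u n - (2 *\<^sub>R B (x n) - B (x_prev n)) - C (x n)"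

lemma a2_mem: "a2 n \<in> A2 (x (Suc n))"
proof -
  define w where "w = x n - gam *\<^sub>R u n - gam *\<^sub>R (2 *\<^sub>R B (x n) - B (x_prev n)) - gam *\<^sub>R C (x n)"
  have "x (Suc n) = resolvent gam A2 w" unfolding w_def x_rec x_prev_def ..
  moreover have "a2 n = (1 / gam) *\<^sub>R (w - x (Suc n))"
    unfolding w_def a2_def using gam_pos by (simp add: algebra_simps)
  ultimately show ?thesis using resolvent_residual_mem[OF A2 gam_pos, of w] by simp
qed

lemma u_mem: "u (Suc n) \<in> A1 (y (Suc n))"
proof -
  define w where "w = 2 *\<^sub>R x (Suc n) - x n + lam *\<^sub>R u n"
  have "y (Suc n) = resolvent lam A1 w" unfolding w_def y_rec ..
  moreover have "u (Suc n) = (1 / lam) *\<^sub>R (w - y (Suc n))"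
    unfolding w_def u_rec using lam_pos by (simp add: algebra_simps)
  ultimately show ?thesis using resolvent_residual_mem[OF A1 lam_pos, of w] by simp
qed

lemma y_eq: "y (Suc n) = 2 *\<^sub>R x (Suc n) - x n - lam *\<^sub>R (u (Suc n) - u n)"
  using lam_pos by (simp add: u_rec algebra_simps)

lemma B_lip: "norm (B a - B b) \<le> L * norm (a - b)"
  using lipschitz_onD[OF B_lipschitz, of a b] by (simp add: dist_norm)

lemma B_mono: "0 \<le> (a - b) \<bullet> (B a - B b)"
  using B_monotone unfolding monotone_fun_def by blast

lemma C_mono: "0 \<le> (a - b) \<bullet> (C a - C b)"
  by (rule cocoercive_monotone[OF \<beta>_pos C_cocoercive])

lemma C_lip: "norm (C a - C b) \<le> (1 / \<beta>) * norm (a - b)"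
  by (rule cocoercive_lipschitz[OF \<beta>_pos C_cocoercive])

definition kuhn_tucker :: "('a \<times> 'a) set" where
  "kuhn_tucker = {(p, q). q \<in> A1 p \<and> - q - B p - C p \<in> A2 p}"

lemma kuhn_tucker_nonempty: "kuhn_tucker \<noteq> {}"
proof -
  obtain z where "z \<in> zer (op_sum4 A1 A2 B C)" using zer_nonempty by blast
  then obtain v1 v2 where "v1 + v2 + B z + C z = 0" "v1 \<in> A1 z" "v2 \<in> A2 z"
    unfolding zer_def op_sum4_def by auto
  moreover have "- v1 - B z - C z = v2 - (v1 + v2 + B z + C z)" by (simp add: algebra_simps)
  ultimately have "(z, v1) \<in> kuhn_tucker" unfolding kuhn_tucker_def by simp
  then show ?thesis by blast
qed

lemma kuhn_tucker_zer:
  assumes "(p, q) \<in> kuhn_tucker"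
  shows "p \<in> zer (op_sum4 A1 A2 B C)"
proof -
  have "q \<in> A1 p" "- q - B p - C p \<in> A2 p" using assms unfolding kuhn_tucker_def by auto
  moreover have "0 = q + (- q - B p - C p) + B p + C p" by simp
  ultimately show ?thesis unfolding zer_def op_sum4_def by blast
qed

definition kappa :: real where "kappa = 1 / gam - 2 * L - 1 / (2 * \<beta>)"

lemma kappa_gt: "1 / lam < kappa"
proof -
  have "0 < \<beta> + lam * (2 * \<beta> * L + 1)" using \<beta>_pos lam_pos L_pos by (simp add: add_pos_pos)
  then have "gam * (\<beta> + lam * (2 * \<beta> * L + 1)) < lam * \<beta>"
    using gam_bound by (simp add: field_simps)
  then have "1 / lam + 2 * L + 1 / \<beta> < 1 / gam"
    using gam_pos lam_pos \<beta>_pos by (simp add: field_simps)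
  moreover have "1 / (2 * \<beta>) < 1 / \<beta>" using \<beta>_pos by (simp add: field_simps)
  ultimately show ?thesis unfolding kappa_def by linarith
qed

lemma kappa_pos: "kappa > 0"
  using kappa_gt less_trans[of 0 "1 / lam" kappa] lam_pos by simp

definition lyapunov :: "'a \<Rightarrow> 'a \<Rightarrow> nat \<Rightarrow> real" where
  "lyapunov p q n = qform (1 / gam) lam (x n - p) (u n - q)
     - 2 * ((x n - p) \<bullet> (B (x n) - B (x_prev n))) + L * (norm (x n - x_prev n))\<^sup>2"

lemma lyapunov_descent:
  assumes "(p, q) \<in> kuhn_tucker"
  shows "lyapunov p q (Suc n) \<le> lyapunov p q n - qform kappa lam (x (Suc n) - x n) (u (Suc n) - u n)"
proof -
  have q: "q \<in> A1 p" "- q - B p - C p \<in> A2 p" using assms unfolding kuhn_tucker_def by auto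
  define X where "X = x n - p"
  define U where "U = u n - q"
  define d where "d = x (Suc n) - x n"
  define e where "e = u (Suc n) - u n"
  define bn where "bn = B (x n) - B (x_prev n)"
  define bS where "bS = B (x (Suc n)) - B (x n)"
  define Bd where "Bd = B (x (Suc n)) - B p"
  define c where "c = C (x n) - C p"
  define w where "w = norm (x n - x_prev n)"
  have Xd: "X + d = x (Suc n) - p" and Ue: "U + e = u (Suc n) - q"
    unfolding X_def d_def U_def e_def by simp_all
  have "- (1 / gam) *\<^sub>R d - U - Bd + bS - bn - c = a2 n - (- q - B p - C p)"
    unfolding d_def U_def Bd_def bS_def bn_def c_def a2_def by (simp add: algebra_simps scaleR_2)
  then have A2: "0 \<le> (X + d) \<bullet> (- (1 / gam) *\<^sub>R d - U - Bd + bS - bn - c)"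
    unfolding Xd using maximally_monotone_monotone[OF A2 a2_mem q(2)] by simp
  have "X + 2 *\<^sub>R d - lam *\<^sub>R e = y (Suc n) - p"
    unfolding X_def d_def e_def y_eq by (simp add: algebra_simps scaleR_2)
  then have A1: "0 \<le> (X + 2 *\<^sub>R d - lam *\<^sub>R e) \<bullet> (U + e)"
    unfolding Ue using maximally_monotone_monotone[OF A1 u_mem q(1)] by simp
  have B: "0 \<le> (X + d) \<bullet> Bd" unfolding Xd Bd_def by (rule B_mono)
  have C: "\<beta> * (norm c)\<^sup>2 \<le> X \<bullet> c"
    using C_cocoercive unfolding cocoercive_def X_def c_def by blast
  have "\<bar>d \<bullet> bn\<bar> \<le> norm d * norm bn" by (rule Cauchy_Schwarz_ineq2)
  also have "\<dots> \<le> norm d * (L * w)" unfolding bn_def w_def by (intro mult_left_mono B_lip) auto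
  finally have lip: "\<bar>d \<bullet> bn\<bar> \<le> L * norm d * w" by (simp add: algebra_simps)
  have "qform (1 / gam) lam (X + d) (U + e) - 2 * ((X + d) \<bullet> bS) + L * (norm d)\<^sup>2
    \<le> qform (1 / gam) lam X U - 2 * (X \<bullet> bn) + L * w\<^sup>2 - qform kappa lam d e"
    using lyapunov_step_estimate[OF \<beta>_pos _ A2 A1 B C lip] L_pos unfolding kappa_def by simp
  then show ?thesis
    unfolding lyapunov_def Xd Ue unfolding X_def U_def d_def e_def bS_def bn_def w_def by simp
qed

lemma inverse_kappa_lt: "1 / kappa < lam"
  using kappa_gt kappa_pos lam_pos by (simp add: field_simps)

lemma lyapunov_ge: "qform kappa lam (x n - p) (u n - q) \<le> lyapunov p q n"
proof -
  define X where "X = x n - p"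
  define w where "w = norm (x n - x_prev n)"
  have "X \<bullet> (B (x n) - B (x_prev n)) \<le> norm X * (L * w)"
    using norm_cauchy_schwarz[of X] B_lip[of "x n" "x_prev n"] unfolding w_def
    by (meson mult_left_mono norm_ge_zero order_trans)
  moreover have "L * (2 * (norm X * w)) \<le> L * ((norm X)\<^sup>2 + w\<^sup>2)"
    using sum_squares_bound[of "norm X" w] L_pos by (intro mult_left_mono) auto
  ultimately have "qform (1 / gam - L) lam X (u n - q) \<le> lyapunov p q n"
    unfolding lyapunov_def qform_def X_def w_def by (simp add: algebra_simps)
  moreover have "0 < 1 / (2 * \<beta>)" using \<beta>_pos by simp
  then have "kappa \<le> 1 / gam - L" unfolding kappa_def using L_pos by linarith
  ultimately show ?thesis unfolding X_def by (meson order_trans qform_mono)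
qed

lemma qform_kappa_ge:
  "(kappa - 1 / lam) * (norm a)\<^sup>2 \<le> qform kappa lam a b"
  "(lam - 1 / kappa) * (norm b)\<^sup>2 \<le> qform kappa lam a b"
  by (rule qform_ge_left[OF lam_pos], rule qform_ge_right[OF kappa_pos])

lemma qform_kappa_nonneg: "0 \<le> qform kappa lam a b"
  using kappa_gt by (intro order_trans[OF _ qform_kappa_ge(1)]) simp

lemma lyapunov_nonneg: "0 \<le> lyapunov p q n"
  using lyapunov_ge qform_kappa_nonneg order_trans by blast

lemma lyapunov_decseq:
  assumes "(p, q) \<in> kuhn_tucker"
  shows "decseq (lyapunov p q)"
proof (rule decseq_SucI)
  show "lyapunov p q (Suc n) \<le> lyapunov p q n" for n
    using lyapunov_descent[OF assms, of n] qform_kappa_nonneg[of "x (Suc n) - x n" "u (Suc n) - u n"]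
    by linarith
qed

lemma lyapunov_sum_bound:
  assumes "(p, q) \<in> kuhn_tucker"
  shows "(\<Sum>k<n. qform kappa lam (x (Suc k) - x k) (u (Suc k) - u k)) \<le> lyapunov p q 0 - lyapunov p q n"
proof (induction n)
  case (Suc n)
  then show ?case using lyapunov_descent[OF assms, of n] by simp
qed simp

lemma increments_tendsto_zero:
  "(\<lambda>n. x (Suc n) - x n) \<longlonglongrightarrow> 0" "(\<lambda>n. u (Suc n) - u n) \<longlonglongrightarrow> 0"
proof -
  obtain p q where pq: "(p, q) \<in> kuhn_tucker" using kuhn_tucker_nonempty by auto
  have sums: "(\<Sum>k<n. qform kappa lam (x (Suc k) - x k) (u (Suc k) - u k)) \<le> lyapunov p q 0" for n
    using lyapunov_sum_bound[OF pq, of n] lyapunov_nonneg[of p q n] by linarith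
  show "(\<lambda>n. x (Suc n) - x n) \<longlonglongrightarrow> 0"
    using kappa_gt by (intro tendsto_zero_if_sq_sums_bounded[OF _ qform_kappa_ge(1) sums]) simp
  show "(\<lambda>n. u (Suc n) - u n) \<longlonglongrightarrow> 0"
    using inverse_kappa_lt by (intro tendsto_zero_if_sq_sums_bounded[OF _ qform_kappa_ge(2) sums]) simp
qed

lemma bounded_iterates:
  obtains Kx Ku where "\<And>n. norm (x n) \<le> Kx" "\<And>n. norm (u n) \<le> Ku"
proof -
  obtain p q where pq: "(p, q) \<in> kuhn_tucker" using kuhn_tucker_nonempty by auto
  have bound: "norm v \<le> norm v0 + sqrt (lyapunov p q 0 / c)"
    if "c > 0" "c * (norm (v - v0))\<^sup>2 \<le> lyapunov p q 0" for c and v v0 :: 'a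
  proof -
    have "norm (v - v0) \<le> sqrt (lyapunov p q 0 / c)"
      using that by (intro real_le_rsqrt) (simp add: field_simps mult.commute)
    then show ?thesis using norm_triangle_ineq2[of v v0] by linarith
  qed
  have le_init: "c * (norm a)\<^sup>2 \<le> lyapunov p q 0"
    if "c * (norm a)\<^sup>2 \<le> qform kappa lam (x n - p) (u n - q)" for c a n
    using that lyapunov_ge[of n p q] decseqD[OF lyapunov_decseq[OF pq], of 0 n] by linarith
  show ?thesis
  proof (rule that)
    show "norm (x n) \<le> norm p + sqrt (lyapunov p q 0 / (kappa - 1 / lam))" for n
      using kappa_gt by (intro bound le_init[OF qform_kappa_ge(1)]) simp
    show "norm (u n) \<le> norm q + sqrt (lyapunov p q 0 / (lam - 1 / kappa))" for n
      using inverse_kappa_lt by (intro bound le_init[OF qform_kappa_ge(2)]) simp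
  qed
qed

lemma B_increments_tendsto_zero: "(\<lambda>n. B (x (Suc n)) - B (x n)) \<longlonglongrightarrow> 0"
proof (rule tendsto_0_le[OF increments_tendsto_zero(1), where K = L])
  show "\<forall>\<^sub>F n in sequentially. norm (B (x (Suc n)) - B (x n)) \<le> norm (x (Suc n) - x n) * L"
    using B_lip by (simp add: mult.commute)
qed

lemma qform_dist_convergent:
  assumes pq: "(p, q) \<in> kuhn_tucker"
  shows "convergent (\<lambda>n. qform (1 / gam) lam (x n - p) (u n - q))"
proof -
  have "\<forall>n. 0 \<le> lyapunov p q n" using lyapunov_nonneg by blast
  with lyapunov_decseq[OF pq] obtain l where l: "lyapunov p q \<longlonglongrightarrow> l" by (rule decseq_convergent)
  obtain Kx Ku where Kx: "\<And>n. norm (x n) \<le> Kx" and "\<And>n. norm (u n) \<le> Ku"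
    using bounded_iterates by blast
  have "norm (x (Suc n) - p) \<le> Kx + norm p" for n
    using Kx[of "Suc n"] norm_triangle_ineq4[of "x (Suc n)" p] by linarith
  then have inner0: "(\<lambda>n. (x (Suc n) - p) \<bullet> (B (x (Suc n)) - B (x n))) \<longlonglongrightarrow> 0"
    by (rule tendsto_inner_bounded_null[OF _ B_increments_tendsto_zero])
  have "(\<lambda>n. norm (x (Suc n) - x n)) \<longlonglongrightarrow> 0"
    using increments_tendsto_zero(1) by (simp add: tendsto_norm_zero_iff)
  then have sq0: "(\<lambda>n. (norm (x (Suc n) - x n))\<^sup>2) \<longlonglongrightarrow> 0\<^sup>2" by (rule tendsto_power)
  have "(\<lambda>n. lyapunov p q (Suc n) + 2 * ((x (Suc n) - p) \<bullet> (B (x (Suc n)) - B (x n)))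
      - L * (norm (x (Suc n) - x n))\<^sup>2) \<longlonglongrightarrow> l + 2 * 0 - L * 0\<^sup>2"
    by (rule tendsto_diff[OF tendsto_add[OF LIMSEQ_Suc[OF l] tendsto_mult_left[OF inner0]]
        tendsto_mult_left[OF sq0]])
  then have "(\<lambda>n. qform (1 / gam) lam (x (Suc n) - p) (u (Suc n) - q)) \<longlonglongrightarrow> l"
    by (simp add: lyapunov_def)
  then have "(\<lambda>n. qform (1 / gam) lam (x n - p) (u n - q)) \<longlonglongrightarrow> l" by (rule LIMSEQ_imp_Suc)
  then show ?thesis unfolding convergent_def by blast
qed

lemma residual_tendsto_zero:
  "(\<lambda>n. a2 n + u (Suc n) + B (x (Suc n)) + C (x (Suc n))) \<longlonglongrightarrow> 0"
proof -
  have prev: "(\<lambda>n. x n - x_prev n) \<longlonglongrightarrow> 0"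
    by (rule LIMSEQ_imp_Suc) (simp add: increments_tendsto_zero(1))
  have "(\<lambda>n. - (1 / gam) *\<^sub>R (x (Suc n) - x n) + (u (Suc n) - u n) + (B (x (Suc n)) - B (x n))
      - (B (x n) - B (x_prev n)) + (C (x (Suc n)) - C (x n))) \<longlonglongrightarrow> - (1 / gam) *\<^sub>R 0 + 0 + 0 - 0 + 0"
  proof (intro tendsto_add tendsto_diff tendsto_scaleR tendsto_const increments_tendsto_zero
      B_increments_tendsto_zero)
    show "(\<lambda>n. B (x n) - B (x_prev n)) \<longlonglongrightarrow> 0"
      using B_lip by (intro tendsto_0_le[OF prev, where K = L]) (simp add: mult.commute)
    show "(\<lambda>n. C (x (Suc n)) - C (x n)) \<longlonglongrightarrow> 0"
      using C_lip by (intro tendsto_0_le[OF increments_tendsto_zero(1), where K = "1 / \<beta>"])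
        (simp add: mult.commute)
  qed
  then show ?thesis by (simp add: a2_def algebra_simps scaleR_2)
qed

definition weak_cluster :: "'a \<Rightarrow> 'a \<Rightarrow> bool" where
  "weak_cluster p q \<longleftrightarrow>
     (\<exists>r. strict_mono r \<and> weakly_converges (x \<circ> r) p \<and> weakly_converges (u \<circ> r) q)"

lemma weak_cluster_of_x:
  assumes "strict_mono r" "weakly_converges (x \<circ> r) p"
  shows "\<exists>q. weak_cluster p q"
proof -
  obtain Kx Ku where "\<And>n. norm (x n) \<le> Kx" "\<And>n. norm (u n) \<le> Ku"
    using bounded_iterates by blast
  then obtain r' q where r': "strict_mono r'" and "weakly_converges (u \<circ> r \<circ> r') q"
    using bounded_imp_weakly_convergent_subseq[of "u \<circ> r" Ku] by auto
  moreover have "weakly_converges (x \<circ> r \<circ> r') p" by (rule weakly_converges_subseq[OF assms(2) r'])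
  moreover have "strict_mono (r \<circ> r')" by (rule strict_mono_o[OF assms(1) r'])
  ultimately show ?thesis
    unfolding weak_cluster_def by (intro exI[of _ q] exI[of _ "r \<circ> r'"]) (simp add: o_assoc)
qed

lemma BC_lip: "norm ((B a + C a) - (B b + C b)) \<le> (L + 1 / \<beta>) * norm (a - b)"
proof -
  have "norm ((B a + C a) - (B b + C b)) \<le> norm (B a - B b) + norm (C a - C b)"
    by (metis add_diff_add norm_triangle_ineq)
  also have "\<dots> \<le> (L + 1 / \<beta>) * norm (a - b)"
    using B_lip[of a b] C_lip[of a b] by (simp add: algebra_simps)
  finally show ?thesis .
qed

lemma step_pairing_nonneg:
  assumes a: "a \<in> A2 p'" and v: "v \<in> A1 q'"
  shows "0 \<le> (x (Suc n) - p') \<bullet> ((a2 n + u (Suc n) + (B (x (Suc n)) + C (x (Suc n))))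
      - u (Suc n) - (a + (B p' + C p'))) + (y (Suc n) - q') \<bullet> (u (Suc n) - v)"
proof -
  have m1: "0 \<le> (x (Suc n) - p') \<bullet> (a2 n - a)" by (rule maximally_monotone_monotone[OF A2 a2_mem a])
  have m2: "0 \<le> (x (Suc n) - p') \<bullet> ((B (x (Suc n)) + C (x (Suc n))) - (B p' + C p'))"
    using B_mono[of "x (Suc n)" p'] C_mono[of "x (Suc n)" p'] by (simp add: inner_diff_right inner_add_right)
  have m3: "0 \<le> (y (Suc n) - q') \<bullet> (u (Suc n) - v)"
    by (rule maximally_monotone_monotone[OF A1 u_mem v])
  have eq: "(a2 n + u (Suc n) + (B (x (Suc n)) + C (x (Suc n)))) - u (Suc n) - (a + (B p' + C p'))
      = (a2 n - a) + ((B (x (Suc n)) + C (x (Suc n))) - (B p' + C p'))"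
    by (simp add: algebra_simps)
  show ?thesis unfolding eq inner_add_right using m1 m2 m3 by linarith
qed

lemma weak_cluster_limit_ineq:
  assumes "weak_cluster p q" and a: "a \<in> A2 p'" and v: "v \<in> A1 q'"
  shows "0 \<le> (p - p') \<bullet> (- q - (a + (B p' + C p'))) + (p - q') \<bullet> (q - v)"
proof -
  obtain r where r: "strict_mono r" and wx: "weakly_converges (x \<circ> r) p"
    and wu: "weakly_converges (u \<circ> r) q"
    using assms unfolding weak_cluster_def by blast
  obtain Kx Ku where Kx: "\<And>n. norm (x n) \<le> Kx" and Ku: "\<And>n. norm (u n) \<le> Ku"
    using bounded_iterates by blast
  define X where "X k = x (Suc (r k))" for k
  define U where "U k = u (Suc (r k))" for k
  define Y where "Y k = y (Suc (r k))" for k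
  define E where "E k = a2 (r k) + U k + (B (X k) + C (X k))" for k
  have sub: "(\<lambda>k. f (Suc (r k)) - f (r k)) \<longlonglongrightarrow> 0" if "(\<lambda>n. f (Suc n) - f n) \<longlonglongrightarrow> 0" for f
    using LIMSEQ_subseq_LIMSEQ[OF that r] by (simp add: o_def)
  have wX: "weakly_converges X p"
    unfolding X_def by (rule weakly_converges_if_diff_null[OF wx]) (simp add: o_def sub increments_tendsto_zero)
  have wU: "weakly_converges U q"
    unfolding U_def by (rule weakly_converges_if_diff_null[OF wu]) (simp add: o_def sub increments_tendsto_zero)
  have "(\<lambda>k. (x (Suc (r k)) - x (r k)) - lam *\<^sub>R (u (Suc (r k)) - u (r k))) \<longlonglongrightarrow> 0 - lam *\<^sub>R 0"
    by (intro tendsto_diff tendsto_scaleR tendsto_const sub increments_tendsto_zero)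
  then have YX: "(\<lambda>k. Y k - X k) \<longlonglongrightarrow> 0"
    unfolding Y_def X_def y_eq by (simp add: algebra_simps scaleR_2)
  have E0: "E \<longlonglongrightarrow> 0"
    using LIMSEQ_subseq_LIMSEQ[OF residual_tendsto_zero r]
    unfolding E_def X_def U_def by (simp add: o_def add.assoc)
  show ?thesis
  proof (rule LIMSEQ_le_const[OF tendsto_skew_pairing[OF wX wU YX E0]])
    show "\<exists>N. \<forall>k\<ge>N. 0 \<le> (X k - p') \<bullet> (E k - U k - (a + (B p' + C p'))) + (Y k - q') \<bullet> (U k - v)"
      using step_pairing_nonneg[OF a v] unfolding E_def X_def U_def Y_def by blast
  qed (use Kx Ku in \<open>auto simp: X_def U_def\<close>)
qed

lemma weak_cluster_kuhn_tucker:
  assumes cluster: "weak_cluster p q"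
  shows "(p, q) \<in> kuhn_tucker"
proof -
  have A2_part: "- q - (B p + C p) \<in> A2 p"
  proof (rule maximally_monotone_add_lipschitz_mem[OF A2 BC_lip])
    fix p' a assume "a \<in> A2 p'"
    obtain q' v where "v \<in> A1 q'" "(p - q') \<bullet> (q - v) \<le> 0"
      using maximally_monotone_exists_pairing_nonpos[OF A1] by blast
    with weak_cluster_limit_ineq[OF cluster \<open>a \<in> A2 p'\<close>]
    show "0 \<le> (p - p') \<bullet> (- q - (a + (B p' + C p')))" by fastforce
  qed
  have "q \<in> A1 p"
  proof (rule maximally_monotoneD[OF A1])
    fix q' v assume "v \<in> A1 q'"
    from weak_cluster_limit_ineq[OF cluster A2_part this] show "0 \<le> (p - q') \<bullet> (q - v)" by simp
  qed
  with A2_part show ?thesis unfolding kuhn_tucker_def by (simp add: algebra_simps)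
qed

lemma weak_cluster_unique:
  assumes "weak_cluster p1 q1" "weak_cluster p2 q2"
  shows "p1 = p2"
proof -
  obtain r1 r2 where r1: "strict_mono r1" "weakly_converges (x \<circ> r1) p1" "weakly_converges (u \<circ> r1) q1"
    and r2: "strict_mono r2" "weakly_converges (x \<circ> r2) p2" "weakly_converges (u \<circ> r2) q2"
    using assms unfolding weak_cluster_def by blast
  have "0 < 1 / (2 * \<beta>)" using \<beta>_pos by simp
  then have "1 / lam < 1 / gam" using kappa_gt L_pos unfolding kappa_def by linarith
  then show ?thesis
    using weak_cluster_points_eq_if_qform_dist_convergent[OF lam_pos _ _ _ r1 r2]
      qform_dist_convergent weak_cluster_kuhn_tucker assms by blast
qed

theorem weakly_converges_to_zero:
  "\<exists>xbar \<in> zer (op_sum4 A1 A2 B C). weakly_converges x xbar"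
proof -
  obtain Kx Ku where Kx: "\<And>n. norm (x n) \<le> Kx" and "\<And>n. norm (u n) \<le> Ku"
    using bounded_iterates by blast
  obtain r p where "strict_mono r" "weakly_converges (x \<circ> r) p"
    using bounded_imp_weakly_convergent_subseq[of x Kx] Kx by blast
  then obtain q where pq: "weak_cluster p q" using weak_cluster_of_x by blast
  have "weakly_converges x p"
  proof (rule weakly_converges_if_weak_cluster_points_eq[OF Kx])
    fix r' l assume "strict_mono r'" "weakly_converges (x \<circ> r') l"
    then obtain q' where "weak_cluster l q'" using weak_cluster_of_x by blast
    with pq show "l = p" by (rule weak_cluster_unique[symmetric])
  qed
  with kuhn_tucker_zer[OF weak_cluster_kuhn_tucker[OF pq]] show ?thesis by blast
qed

end

theorem theorem3p3:
  fixes A1 A2 :: "'a::{real_inner, complete_space} \<Rightarrow> 'a set"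
    and B C :: "'a \<Rightarrow> 'a"
    and L \<beta> lam gam :: real
    and xm1 x0 u0 :: 'a
    and x y u :: "nat \<Rightarrow> 'a"
  assumes A1: "maximally_monotone A1"
    and A2: "maximally_monotone A2"
    and Bmono: "monotone_fun B"
    and Lpos: "L > 0"
    and Blip: "L-lipschitz_on UNIV B"
    and betapos: "\<beta> > 0"
    and Ccoc: "cocoercive \<beta> C"
    and zne: "zer (op_sum4 A1 A2 B C) \<noteq> {}"
    and lampos: "lam > 0"
    and gampos: "gam > 0"
    and gamub: "gam < lam * \<beta> / (\<beta> + lam * (2 * \<beta> * L + 1))"
    and x_init: "x 0 = x0"
    and u_init: "u 0 = u0"
    and x_rec: "\<And>n. x (Suc n) = resolvent gam A2
        (x n - gam *\<^sub>R u n
             - gam *\<^sub>R (2 *\<^sub>R B (x n) - B (if n = 0 then xm1 else x (n - 1)))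
             - gam *\<^sub>R C (x n))"
    and y_rec: "\<And>n. y (Suc n) = resolvent lam A1 (2 *\<^sub>R x (Suc n) - x n + lam *\<^sub>R u n)"
    and u_rec: "\<And>n. u (Suc n) = u n + (1 / lam) *\<^sub>R (2 *\<^sub>R x (Suc n) - x n - y (Suc n))"
  shows "\<exists>xbar \<in> zer (op_sum4 A1 A2 B C). weakly_converges x xbar"
proof -
  interpret four_operator_splitting A1 A2 B C L \<beta> lam gam xm1 x y u
    by (rule four_operator_splitting.intro) (fact assms)+
  show ?thesis by (rule weakly_converges_to_zero)
qed

end
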